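(* Let $s\ge0$, $p\in[1,+\infty)$, $\beta\in\mathbb R\setminus\{0\}$, $\varepsilon\in(0,1)$ and $f\in B^{s,\infty}_p(\mathbb R^d)$. Then $$E(\beta,f)\subset\left\{x\in\mathbb R^d:\ \liminf_{j\to+\infty}\ \sup_{l\in[(1-\varepsilon)j,(1+\varepsilon)j]\cap\mathbb N}\frac{\log|Q_lf(x)|}{j\log2}\ge\beta\right\}.$$
   Context: Standing setup. $(V_j)_{j\in\mathbb Z}$ is an orthogonal multiresolution analysis of $L^2(\mathbb R^d)$ with scaling function $\varphi$ (the integer translates of $\varphi$ form an orthonormal basis of $V_0$), and $\psi^{(1)},\dots,\psi^{(2^d-1)}$ are associated wavelets: the functions $2^{dj/2}\psi^{(i)}(2^j\cdot-k)$ form an orthonormal basis of $L^2(\mathbb R^d)$. The functions $\varphi,\psi^{(i)}$ are smooth, with fast decay: for every $N\ge0$ there is $C_N$ with $|\psi^{(i)}(x)|\le C_N(1+\|x\|)^{-N}$. For $j\ge0$, $k\in\mathbb Z^d$, the dyadic cube $\lambda=(j,k)$ is $\prod_{m=1}^d[k_m2^{-j},(k_m+1)2^{-j})$; $\Lambda_j$ is the set of such cubes; $\psi^{(i)}_\lambda(x)=\psi^{(i)}(2^jx-k)$. For $f$ set $C_k=\int\overline{\varphi(x-k)}f$, $c^{(i)}_\lambda=2^{dj}\int\overline{\psi^{(i)}_\lambda}f$, $Q_lf(x)=\sum_i\sum_{\lambda\in\Lambda_l}c^{(i)}_\lambda\psi^{(i)}_\lambda(x)$, $P_jf(x)=\sum_kC_k\varphi(x-k)+\sum_{0\le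 l<j}Q_lf(x)$, and when $(P_jf(x))_j$ converges $R_jf(x)=\sum_{l\ge j}Q_lf(x)$. $B^{s,\infty}_p(\mathbb R^d)$ is the set of $f$ with $(C_k)\in\ell^p$ and $\sup_{j}2^{(s-d/p)j}(\sum_i\sum_{\lambda\in\Lambda_j}|c^{(i)}_\lambda|^p)^{1/p}<\infty$. Level set (with $\log0=-\infty$): for $\beta>0$, $E(\beta,f)=\{x:\lim_j\frac{\log|P_jf(x)|}{j\log2}=\beta\}$; for $\beta<0$, $E(\beta,f)=\{x:(P_jf(x))_j\text{ converges and }\lim_j\frac{\log|R_jf(x)|}{j\log2}=\beta\}$. *)

theory Defs
  imports "HOL-Analysis.Analysis"
begin

section \<open>L^2(R^d) notions (functions R^d -> C, modulo a.e. equality)\<close>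

definition L2 :: "(real^'d \<Rightarrow> complex) set" where
  "L2 = {g. g \<in> borel_measurable lborel \<and> integrable lborel (\<lambda>x. (cmod (g x))^2)}"

definition ip :: "(real^'d \<Rightarrow> complex) \<Rightarrow> (real^'d \<Rightarrow> complex) \<Rightarrow> complex" where
  "ip g h = (LINT x|lborel. g x * cnj (h x))"

definition l2norm :: "(real^'d \<Rightarrow> complex) \<Rightarrow> real" where
  "l2norm g = sqrt (LINT x|lborel. (cmod (g x))^2)"

definition ae_zero :: "(real^'d \<Rightarrow> complex) \<Rightarrow> bool" where
  "ae_zero g \<longleftrightarrow> (AE x in lborel. g x = 0)"

definition closed_subspace :: "(real^'d \<Rightarrow> complex) set \<Rightarrow> bool" where
  "closed_subspace W \<longleftrightarrow> W \<subseteq> L2 \<and> (\<lambda>x. 0) \<in> W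
     \<and> (\<forall>g\<in>W. \<forall>h\<in>W. (\<lambda>x. g x + h x) \<in> W)
     \<and> (\<forall>g\<in>W. \<forall>c. (\<lambda>x. c * g x) \<in> W)
     \<and> (\<forall>g\<in>W. \<forall>h\<in>L2. (AE x in lborel. g x = h x) \<longrightarrow> h \<in> W)
     \<and> (\<forall>u g. (\<forall>n. u n \<in> W) \<longrightarrow> g \<in> L2 \<longrightarrow>
            (\<lambda>n. l2norm (\<lambda>x. u n x - g x)) \<longlonglongrightarrow> 0 \<longrightarrow> g \<in> W)"

definition onb_of :: "('i \<Rightarrow> (real^'d \<Rightarrow> complex)) \<Rightarrow> 'i set \<Rightarrow> (real^'d \<Rightarrow> complex) set \<Rightarrow> bool" where
  "onb_of e I W \<longleftrightarrow> (\<forall>i\<in>I. e i \<in> W)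
     \<and> (\<forall>i\<in>I. \<forall>j\<in>I. ip (e i) (e j) = (if i = j then 1 else 0))
     \<and> (\<forall>g\<in>W. (\<forall>i\<in>I. ip g (e i) = 0) \<longrightarrow> ae_zero g)"

definition ivec :: "int^'d \<Rightarrow> real^'d" where
  "ivec k = (\<chi> m. real_of_int (k $ m))"

coinductive smooth_fun :: "(real^'d \<Rightarrow> complex) \<Rightarrow> bool" where
  "(\<forall>x. f differentiable (at x)) \<Longrightarrow>
   (\<forall>m. smooth_fun (\<lambda>x. frechet_derivative f (at x) (axis m 1))) \<Longrightarrow> smooth_fun f"

definition fast_decay :: "(real^'d \<Rightarrow> complex) \<Rightarrow> bool" where
  "fast_decay g \<longleftrightarrow> (\<forall>N::real. N \<ge> 0 \<longrightarrow> (\<exists>C. \<forall>x. cmod (g x) \<le> C * (1 + norm x) powr (- N)))"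

abbreviation nwav :: "'d itself \<Rightarrow> nat" where
  "nwav _ \<equiv> 2 ^ CARD('d) - 1"

definition orth_MRA :: "(int \<Rightarrow> (real^'d \<Rightarrow> complex) set) \<Rightarrow> (real^'d \<Rightarrow> complex) \<Rightarrow> bool" where
  "orth_MRA V \<phi> \<longleftrightarrow> (\<forall>j. closed_subspace (V j))
     \<and> (\<forall>j. V j \<subseteq> V (j + 1))
     \<and> (\<forall>j g. g \<in> V j \<longleftrightarrow> (\<lambda>x. g (2 *\<^sub>R x)) \<in> V (j + 1))
     \<and> (\<forall>g. (\<forall>j. g \<in> V j) \<longrightarrow> ae_zero g)
     \<and> (\<forall>g\<in>L2. \<forall>e>0. \<exists>j. \<exists>h\<in>V j. l2norm (\<lambda>x. g x - h x) < e)
     \<and> onb_of (\<lambda>k x. \<phi> (x - ivec k)) (UNIV :: (int^'d) set) (V 0)"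

definition wavelet_setup ::
  "(int \<Rightarrow> (real^'d \<Rightarrow> complex) set) \<Rightarrow> (real^'d \<Rightarrow> complex) \<Rightarrow> (nat \<Rightarrow> real^'d \<Rightarrow> complex) \<Rightarrow> bool" where
  "wavelet_setup V \<phi> \<psi> \<longleftrightarrow> orth_MRA V \<phi>
     \<and> (\<forall>i\<in>{1..nwav TYPE('d)}. \<psi> i \<in> V 1 \<and> (\<forall>g\<in>V 0. ip (\<psi> i) g = 0))
     \<and> onb_of (\<lambda>(i, j, k) x. complex_of_real (2 powr (real CARD('d) * real_of_int j / 2))
                              * \<psi> i (2 powr (real_of_int j) *\<^sub>R x - ivec k))
              ({1..nwav TYPE('d)} \<times> (UNIV :: int set) \<times> (UNIV :: (int^'d) set)) L2
     \<and> smooth_fun \<phi> \<and> fast_decay \<phi>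
     \<and> (\<forall>i\<in>{1..nwav TYPE('d)}. smooth_fun (\<psi> i) \<and> fast_decay (\<psi> i))"

definition psil :: "(nat \<Rightarrow> real^'d \<Rightarrow> complex) \<Rightarrow> nat \<Rightarrow> nat \<Rightarrow> int^'d \<Rightarrow> real^'d \<Rightarrow> complex" where
  "psil \<psi> i j k x = \<psi> i ((2::real) ^ j *\<^sub>R x - ivec k)"

definition Ccoef :: "(real^'d \<Rightarrow> complex) \<Rightarrow> (real^'d \<Rightarrow> complex) \<Rightarrow> int^'d \<Rightarrow> complex" where
  "Ccoef \<phi> f k = (LINT x|lborel. cnj (\<phi> (x - ivec k)) * f x)"

definition ccoef :: "(nat \<Rightarrow> real^'d \<Rightarrow> complex) \<Rightarrow> (real^'d \<Rightarrow> complex) \<Rightarrow> nat \<Rightarrow> nat \<Rightarrow> int^'d \<Rightarrow> complex" where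
  "ccoef \<psi> f i j k = (2::complex) ^ (CARD('d) * j) * (LINT x|lborel. cnj (psil \<psi> i j k x) * f x)"

definition Qop :: "(nat \<Rightarrow> real^'d \<Rightarrow> complex) \<Rightarrow> (real^'d \<Rightarrow> complex) \<Rightarrow> nat \<Rightarrow> real^'d \<Rightarrow> complex" where
  "Qop \<psi> f l x = (\<Sum>\<^sub>\<infinity>(i, k) \<in> {1..nwav TYPE('d)} \<times> UNIV. ccoef \<psi> f i l k * psil \<psi> i l k x)"

definition Pop :: "(real^'d \<Rightarrow> complex) \<Rightarrow> (nat \<Rightarrow> real^'d \<Rightarrow> complex) \<Rightarrow> (real^'d \<Rightarrow> complex) \<Rightarrow> nat \<Rightarrow> real^'d \<Rightarrow> complex" where
  "Pop \<phi> \<psi> f j x = (\<Sum>\<^sub>\<infinity>k\<in>UNIV. Ccoef \<phi> f k * \<phi> (x - ivec k)) + (\<Sum>l<j. Qop \<psi> f l x)"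

text \<open>R_j f(x) = sum_{l >= j} Q_l f(x) (used only where (P_j f(x))_j converges).\<close>
definition Rop :: "(nat \<Rightarrow> real^'d \<Rightarrow> complex) \<Rightarrow> (real^'d \<Rightarrow> complex) \<Rightarrow> nat \<Rightarrow> real^'d \<Rightarrow> complex" where
  "Rop \<psi> f j x = (\<Sum>n. Qop \<psi> f (j + n) x)"

definition besov :: "real \<Rightarrow> real \<Rightarrow> (real^'d \<Rightarrow> complex) \<Rightarrow> (nat \<Rightarrow> real^'d \<Rightarrow> complex)
                      \<Rightarrow> (real^'d \<Rightarrow> complex) set" where
  "besov s p \<phi> \<psi> = {f. f \<in> borel_measurable lborel
     \<and> (\<forall>k. integrable lborel (\<lambda>x. cnj (\<phi> (x - ivec k)) * f x))
     \<and> (\<forall>i\<in>{1..nwav TYPE('d)}. \<forall>j k. integrable lborel (\<lambda>x. cnj (psil \<psi> i j k x) * f x))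
     \<and> (\<lambda>k. cmod (Ccoef \<phi> f k) powr p) summable_on (UNIV :: (int^'d) set)
     \<and> (\<forall>j. (\<lambda>(i, k). cmod (ccoef \<psi> f i j k) powr p) summable_on ({1..nwav TYPE('d)} \<times> UNIV))
     \<and> (\<exists>B. \<forall>j. 2 powr ((s - real CARD('d) / p) * real j)
           * (\<Sum>\<^sub>\<infinity>(i, k) \<in> {1..nwav TYPE('d)} \<times> UNIV. cmod (ccoef \<psi> f i j k) powr p) powr (1 / p) \<le> B)}"

definition lg :: "complex \<Rightarrow> ereal" where
  "lg z = (if z = 0 then -\<infinity> else ereal (ln (cmod z)))"

definition Eset :: "(real^'d \<Rightarrow> complex) \<Rightarrow> (nat \<Rightarrow> real^'d \<Rightarrow> complex) \<Rightarrow> real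
                     \<Rightarrow> (real^'d \<Rightarrow> complex) \<Rightarrow> (real^'d) set" where
  "Eset \<phi> \<psi> \<beta> f =
    (if \<beta> > 0 then {x. (\<lambda>j. lg (Pop \<phi> \<psi> f j x) / ereal (real j * ln 2)) \<longlonglongrightarrow> ereal \<beta>}
     else {x. convergent (\<lambda>j. Pop \<phi> \<psi> f j x)
              \<and> (\<lambda>j. lg (Rop \<psi> f j x) / ereal (real j * ln 2)) \<longlonglongrightarrow> ereal \<beta>})"

end

theory Submission
  imports Defs "HOL-Real_Asymp.Real_Asymp"
begin

text \<open>Suppose \<open>|F j|\<close> grows like \<open>2^(\<beta> j)\<close> with \<open>\<beta> \<noteq> 0\<close>. At the two ends
  \<open>a \<approx> (1 - \<epsilon>) j\<close> and \<open>b \<approx> (1 + \<epsilon>) j\<close> of the window one of \<open>F a\<close>, \<open>F b\<close> dominates the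
  other exponentially (\<open>F b\<close> if \<open>\<beta> > 0\<close>, \<open>F a\<close> if \<open>\<beta> < 0\<close>), so \<open>|F b - F a|\<close> grows like
  \<open>2^((\<beta> + |\<beta>| \<epsilon>) j)\<close>. This difference is the sum of fewer than \<open>2 j\<close> increments
  \<open>F (l + 1) - F l\<close> with \<open>a \<le> l < b\<close>, so one of them exceeds \<open>2^(\<beta> j)\<close>.
  Both \<open>P\<^sub>j f(x)\<close> and \<open>R\<^sub>j f(x)\<close> are sequences whose increments are \<open>\<plusminus>Q\<^sub>j f(x)\<close>.\<close>

lemma exists_large_increment:
  fixes F Q :: "nat \<Rightarrow> 'a::real_normed_vector"
  assumes step: "\<And>l. norm (F (Suc l) - F l) \<le> norm (Q l)"
    and "a \<le> b" and large: "real (b - a) * T < norm (F b - F a)"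
  shows "\<exists>l\<in>{a..<b}. T < norm (Q l)"
proof (rule ccontr)
  assume "\<not> ?thesis"
  then have small: "norm (Q l) \<le> T" if "l \<in> {a..<b}" for l
    using that by (simp add: not_less)
  have "norm (F b - F a) = norm (\<Sum>l = a..<b. F (Suc l) - F l)"
    using sum_Suc_diff'[OF \<open>a \<le> b\<close>, where f = F] by simp
  also have "\<dots> \<le> (\<Sum>l = a..<b. norm (Q l))"
    by (rule order.trans[OF norm_sum sum_mono[OF step]])
  also have "\<dots> \<le> real (b - a) * T"
    using sum_bounded_above[of "{a..<b}", OF small] by simp
  finally show False using large by simp
qed

lemma tendsto_div_real_of_bounded_deviation:
  fixes x :: "nat \<Rightarrow> real"
  assumes "\<And>j. \<bar>x j - \<kappa> * real j\<bar> \<le> C"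
  shows "(\<lambda>j. x j / real j) \<longlonglongrightarrow> \<kappa>"
proof -
  have "(\<lambda>j. (x j - \<kappa> * real j) / real j) \<longlonglongrightarrow> 0"
  proof (rule Lim_null_comparison)
    show "\<forall>\<^sub>F j in sequentially. norm ((x j - \<kappa> * real j) / real j) \<le> C / real j"
      using assms by (auto intro!: always_eventually divide_right_mono)
    show "(\<lambda>j. C / real j) \<longlonglongrightarrow> 0" by real_asymp
  qed
  then have "(\<lambda>j. (x j - \<kappa> * real j) / real j + \<kappa>) \<longlonglongrightarrow> 0 + \<kappa>"
    by (intro tendsto_add tendsto_const)
  moreover have "\<forall>\<^sub>F j in sequentially. (x j - \<kappa> * real j) / real j + \<kappa> = x j / real j"
    using eventually_gt_at_top[of 0] by eventually_elim (simp add: field_simps)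
  ultimately show ?thesis by (simp add: tendsto_cong)
qed

lemma filterlim_sequentially_of_ratio:
  fixes d :: "nat \<Rightarrow> nat"
  assumes d: "(\<lambda>j. real (d j) / real j) \<longlonglongrightarrow> \<kappa>" and "\<kappa> > 0"
  shows "filterlim d sequentially sequentially"
proof -
  have "\<forall>\<^sub>F j in sequentially. \<kappa> / 2 < real (d j) / real j"
    using order_tendstoD(1)[OF d, of "\<kappa> / 2"] \<open>\<kappa> > 0\<close> by simp
  with eventually_gt_at_top[of 0]
  have "\<forall>\<^sub>F j in sequentially. \<kappa> / 2 * real j \<le> real (d j)"
    by eventually_elim (simp add: field_simps)
  moreover have "filterlim (\<lambda>j. \<kappa> / 2 * real j) at_top sequentially"
    using \<open>\<kappa> > 0\<close> by real_asymp
  ultimately show ?thesis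
    unfolding filterlim_sequentially_iff_filterlim_real by (rule filterlim_at_top_mono[rotated])
qed

lemma tendsto_rate_compose:
  fixes g :: "nat \<Rightarrow> real" and d :: "nat \<Rightarrow> nat"
  assumes g: "(\<lambda>n. g n / real n) \<longlonglongrightarrow> \<beta>"
    and d: "(\<lambda>j. real (d j) / real j) \<longlonglongrightarrow> \<kappa>" and "\<kappa> > 0"
  shows "(\<lambda>j. g (d j) / real j) \<longlonglongrightarrow> \<beta> * \<kappa>"
proof -
  have d_lim: "filterlim d sequentially sequentially"
    using d \<open>\<kappa> > 0\<close> by (rule filterlim_sequentially_of_ratio)
  then have "(\<lambda>j. g (d j) / real (d j)) \<longlonglongrightarrow> \<beta>"
    by (rule filterlim_compose[OF g])
  then have "(\<lambda>j. g (d j) / real (d j) * (real (d j) / real j)) \<longlonglongrightarrow> \<beta> * \<kappa>"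
    using d by (rule tendsto_mult)
  moreover have "\<forall>\<^sub>F j in sequentially. g (d j) / real (d j) * (real (d j) / real j) = g (d j) / real j"
    using eventually_compose_filterlim[OF eventually_gt_at_top[of 0] d_lim] by eventually_elim simp
  ultimately show ?thesis by (rule Lim_transform_eventually)
qed

lemma eventually_norm_le_half_of_rates:
  fixes z w :: "nat \<Rightarrow> 'a::real_normed_vector"
  assumes z: "(\<lambda>j. log 2 (norm (z j)) / real j) \<longlonglongrightarrow> \<alpha>"
    and w: "(\<lambda>j. log 2 (norm (w j)) / real j) \<longlonglongrightarrow> \<gamma>"
    and "\<gamma> < \<alpha>" and nz: "\<forall>\<^sub>F j in sequentially. z j \<noteq> 0"
  shows "\<forall>\<^sub>F j in sequentially. 2 * norm (w j) \<le> norm (z j)"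
proof -
  have "(\<lambda>j. (log 2 (norm (z j)) - log 2 (norm (w j))) / real j) \<longlonglongrightarrow> \<alpha> - \<gamma>"
    using tendsto_diff[OF z w] by (simp add: diff_divide_distrib)
  then have gap: "\<forall>\<^sub>F j in sequentially. (\<alpha> - \<gamma>) / 2 < (log 2 (norm (z j)) - log 2 (norm (w j))) / real j"
    using \<open>\<gamma> < \<alpha>\<close> by (intro order_tendstoD(1)) auto
  have large: "\<forall>\<^sub>F j in sequentially. 1 \<le> (\<alpha> - \<gamma>) / 2 * real j"
    using \<open>\<gamma> < \<alpha>\<close> by real_asymp
  from gap large nz eventually_gt_at_top[of 0]
  show ?thesis
  proof eventually_elim
    case (elim j)
    show ?case
    proof (cases "w j = 0")
      case False
      have "log 2 (norm (w j)) + 1 \<le> log 2 (norm (z j))"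
        using elim by (simp add: field_simps)
      then have "2 powr (log 2 (norm (w j)) + 1) \<le> 2 powr log 2 (norm (z j))"
        by simp
      then show ?thesis
        using False elim(3) by (simp add: powr_add)
    qed simp
  qed
qed

lemma eventually_norm_diff_gt_of_rates:
  fixes z w :: "nat \<Rightarrow> 'a::real_normed_vector"
  assumes z: "(\<lambda>j. log 2 (norm (z j)) / real j) \<longlonglongrightarrow> \<alpha>"
    and w: "(\<lambda>j. log 2 (norm (w j)) / real j) \<longlonglongrightarrow> \<gamma>"
    and "\<gamma> < \<alpha>" "\<beta> < \<alpha>" and nz: "\<forall>\<^sub>F j in sequentially. z j \<noteq> 0"
  shows "\<forall>\<^sub>F j in sequentially. 2 * real j * 2 powr (\<beta> * real j) < norm (z j - w j)"
proof -
  have half: "\<forall>\<^sub>F j in sequentially. 2 * norm (w j) \<le> norm (z j)"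
    using z w \<open>\<gamma> < \<alpha>\<close> nz by (rule eventually_norm_le_half_of_rates)
  have "(\<lambda>j. log 2 (norm (z j)) / real j - (2 + log 2 (real j)) / real j) \<longlonglongrightarrow> \<alpha> - 0"
    by (intro tendsto_diff z) real_asymp
  then have big: "\<forall>\<^sub>F j in sequentially. \<beta> < log 2 (norm (z j)) / real j - (2 + log 2 (real j)) / real j"
    using \<open>\<beta> < \<alpha>\<close> by (intro order_tendstoD(1)) auto
  from half big nz eventually_gt_at_top[of 0] show ?thesis
  proof eventually_elim
    case (elim j)
    have "\<beta> * real j + 2 + log 2 (real j) < log 2 (norm (z j))"
      using elim(2,4) by (simp add: field_simps)
    then have "2 powr (\<beta> * real j + 2 + log 2 (real j)) < 2 powr log 2 (norm (z j))"
      by simp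
    moreover have "2 powr (\<beta> * real j + 2 + log 2 (real j)) = 4 * real j * 2 powr (\<beta> * real j)"
      using elim(4) by (simp add: powr_add)
    ultimately have "4 * real j * 2 powr (\<beta> * real j) < norm (z j)"
      using elim(3) by simp
    then have "2 * real j * 2 powr (\<beta> * real j) < norm (z j) - norm (w j)"
      using elim(1) by simp
    also have "\<dots> \<le> norm (z j - w j)"
      by (rule norm_triangle_ineq2)
    finally show ?case .
  qed
qed

lemma window_endpoint_bounds:
  fixes \<epsilon> :: real assumes "0 \<le> \<epsilon>" "\<epsilon> \<le> 1"
  shows "(1 - \<epsilon>) * real j \<le> real (nat \<lceil>(1 - \<epsilon>) * real j\<rceil>)"
    and "real (nat \<lceil>(1 - \<epsilon>) * real j\<rceil>) \<le> (1 - \<epsilon>) * real j + 1"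
    and "(1 + \<epsilon>) * real j - 1 \<le> real (nat \<lfloor>(1 + \<epsilon>) * real j\<rfloor>)"
    and "real (nat \<lfloor>(1 + \<epsilon>) * real j\<rfloor>) \<le> (1 + \<epsilon>) * real j"
  using assms by (auto simp: of_int_ceiling_le_add_one)

lemma eventually_window_endpoints_far_apart:
  fixes F :: "nat \<Rightarrow> 'a::real_normed_vector"
  assumes nz: "\<forall>\<^sub>F n in sequentially. F n \<noteq> 0"
    and rate: "(\<lambda>n. log 2 (norm (F n)) / real n) \<longlonglongrightarrow> \<beta>"
    and "\<beta> \<noteq> 0" "0 < \<epsilon>" "\<epsilon> < 1"
  shows "\<forall>\<^sub>F j in sequentially. 2 * real j * 2 powr (\<beta> * real j)
           < norm (F (nat \<lfloor>(1 + \<epsilon>) * real j\<rfloor>) - F (nat \<lceil>(1 - \<epsilon>) * real j\<rceil>))"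
proof -
  define a where "a j = nat \<lceil>(1 - \<epsilon>) * real j\<rceil>" for j
  define b where "b j = nat \<lfloor>(1 + \<epsilon>) * real j\<rfloor>" for j
  note ends = window_endpoint_bounds[OF less_imp_le[OF \<open>0 < \<epsilon>\<close>] less_imp_le[OF \<open>\<epsilon> < 1\<close>], folded a_def b_def]
  have "\<bar>real (a j) - (1 - \<epsilon>) * real j\<bar> \<le> 1" for j
    using ends(1,2)[of j] by linarith
  then have a_ratio: "(\<lambda>j. real (a j) / real j) \<longlonglongrightarrow> 1 - \<epsilon>"
    by (rule tendsto_div_real_of_bounded_deviation)
  have "\<bar>real (b j) - (1 + \<epsilon>) * real j\<bar> \<le> 1" for j
    using ends(3,4)[of j] by linarith
  then have b_ratio: "(\<lambda>j. real (b j) / real j) \<longlonglongrightarrow> 1 + \<epsilon>"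
    by (rule tendsto_div_real_of_bounded_deviation)
  have Fa: "(\<lambda>j. log 2 (norm (F (a j))) / real j) \<longlonglongrightarrow> \<beta> - \<beta> * \<epsilon>"
    using tendsto_rate_compose[OF rate a_ratio] \<open>\<epsilon> < 1\<close> by (simp add: algebra_simps)
  have Fb: "(\<lambda>j. log 2 (norm (F (b j))) / real j) \<longlonglongrightarrow> \<beta> + \<beta> * \<epsilon>"
    using tendsto_rate_compose[OF rate b_ratio] \<open>0 < \<epsilon>\<close> by (simp add: algebra_simps)
  have "filterlim a sequentially sequentially"
    using a_ratio by (rule filterlim_sequentially_of_ratio) (use \<open>\<epsilon> < 1\<close> in simp)
  then have a_nz: "\<forall>\<^sub>F j in sequentially. F (a j) \<noteq> 0"
    by (rule eventually_compose_filterlim[OF nz])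
  have "filterlim b sequentially sequentially"
    using b_ratio by (rule filterlim_sequentially_of_ratio) (use \<open>0 < \<epsilon>\<close> in simp)
  then have b_nz: "\<forall>\<^sub>F j in sequentially. F (b j) \<noteq> 0"
    by (rule eventually_compose_filterlim[OF nz])
  have "0 < \<bar>\<beta>\<bar> * \<epsilon>"
    using \<open>\<beta> \<noteq> 0\<close> \<open>0 < \<epsilon>\<close> by simp
  show ?thesis
  proof (cases "\<beta> > 0")
    case True
    then show ?thesis
      using eventually_norm_diff_gt_of_rates[OF Fb Fa _ _ b_nz] \<open>0 < \<bar>\<beta>\<bar> * \<epsilon>\<close>
      unfolding a_def b_def by simp
  next
    case False
    then show ?thesis
      using eventually_norm_diff_gt_of_rates[OF Fa Fb _ _ a_nz] \<open>0 < \<bar>\<beta>\<bar> * \<epsilon>\<close>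
      unfolding a_def b_def by (simp add: norm_minus_commute)
  qed
qed

lemma eventually_large_increment_in_window:
  fixes F Q :: "nat \<Rightarrow> 'a::real_normed_vector"
  assumes step: "\<And>l. norm (F (Suc l) - F l) \<le> norm (Q l)"
    and nz: "\<forall>\<^sub>F n in sequentially. F n \<noteq> 0"
    and rate: "(\<lambda>n. log 2 (norm (F n)) / real n) \<longlonglongrightarrow> \<beta>"
    and "\<beta> \<noteq> 0" "0 < \<epsilon>" "\<epsilon> < 1"
  shows "\<forall>\<^sub>F j in sequentially. \<exists>l. (1 - \<epsilon>) * real j \<le> real l \<and> real l \<le> (1 + \<epsilon>) * real j
           \<and> 2 powr (\<beta> * real j) < norm (Q l)"
proof -
  define a where "a j = nat \<lceil>(1 - \<epsilon>) * real j\<rceil>" for j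
  define b where "b j = nat \<lfloor>(1 + \<epsilon>) * real j\<rfloor>" for j
  note ends = window_endpoint_bounds[OF less_imp_le[OF \<open>0 < \<epsilon>\<close>] less_imp_le[OF \<open>\<epsilon> < 1\<close>], folded a_def b_def]
  have far: "\<forall>\<^sub>F j in sequentially. 2 * real j * 2 powr (\<beta> * real j) < norm (F (b j) - F (a j))"
    unfolding a_def b_def using nz rate assms(4-6) by (rule eventually_window_endpoints_far_apart)
  have long: "\<forall>\<^sub>F j in sequentially. 1 \<le> \<epsilon> * real j"
    using \<open>0 < \<epsilon>\<close> by real_asymp
  from far long show ?thesis
  proof eventually_elim
    case (elim j)
    have "real (a j) \<le> real (b j)"
      using ends[of j] elim(2) by (simp add: algebra_simps)
    then have ab: "a j \<le> b j" by simp
    have "\<epsilon> * real j \<le> real j"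
      using \<open>0 < \<epsilon>\<close> \<open>\<epsilon> < 1\<close> by (simp add: mult_left_le_one_le)
    then have "real (b j - a j) \<le> 2 * real j"
      using ends[of j] ab by (simp add: of_nat_diff algebra_simps)
    then have "real (b j - a j) * 2 powr (\<beta> * real j) \<le> 2 * real j * 2 powr (\<beta> * real j)"
      by (rule mult_right_mono) simp
    also have "\<dots> < norm (F (b j) - F (a j))"
      by (rule elim(1))
    finally have "real (b j - a j) * 2 powr (\<beta> * real j) < norm (F (b j) - F (a j))" .
    then obtain l where l: "a j \<le> l" "l < b j" and "2 powr (\<beta> * real j) < norm (Q l)"
      using exists_large_increment[where F = F and Q = Q, OF step ab] by (meson atLeastLessThan_iff)
    moreover have "(1 - \<epsilon>) * real j \<le> real l"
      using ends(1)[of j] l(1) by linarith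
    moreover have "real l \<le> (1 + \<epsilon>) * real j"
      using ends(4)[of j] l(2) by linarith
    ultimately show ?case
      by blast
  qed
qed

lemma lg_div_eq_log:
  assumes "z \<noteq> 0" "0 < n"
  shows "lg z / ereal (real n * ln 2) = ereal (log 2 (cmod z) / real n)"
  using assms by (simp add: lg_def log_def field_simps)

lemma log_rate_of_lg_rate:
  fixes F :: "nat \<Rightarrow> complex"
  assumes lim: "(\<lambda>n. lg (F n) / ereal (real n * ln 2)) \<longlonglongrightarrow> ereal \<beta>"
  shows "\<forall>\<^sub>F n in sequentially. F n \<noteq> 0"
    and "(\<lambda>n. log 2 (cmod (F n)) / real n) \<longlonglongrightarrow> \<beta>"
proof -
  have "\<forall>\<^sub>F n in sequentially. ereal (\<beta> - 1) < lg (F n) / ereal (real n * ln 2)"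
    using lim by (rule order_tendstoD) simp
  with eventually_gt_at_top[of 0]
  show nz: "\<forall>\<^sub>F n in sequentially. F n \<noteq> 0"
    by eventually_elim (auto simp: lg_def)
  have "\<forall>\<^sub>F n in sequentially. lg (F n) / ereal (real n * ln 2) = ereal (log 2 (cmod (F n)) / real n)"
    using nz eventually_gt_at_top[of 0] by eventually_elim (rule lg_div_eq_log)
  with lim have "(\<lambda>n. ereal (log 2 (cmod (F n)) / real n)) \<longlonglongrightarrow> ereal \<beta>"
    by (rule Lim_transform_eventually)
  then show "(\<lambda>n. log 2 (cmod (F n)) / real n) \<longlonglongrightarrow> \<beta>"
    by (simp add: lim_ereal)
qed

lemma ereal_le_lg_div_of_powr_less:
  assumes "0 < n" "2 powr (\<beta> * real n) < cmod z"
  shows "ereal \<beta> \<le> lg z / ereal (real n * ln 2)"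
proof -
  have "z \<noteq> 0"
    using assms(2) by (metis norm_zero not_less powr_ge_zero)
  have "\<beta> * real n < log 2 (cmod z)"
    using assms(2) \<open>z \<noteq> 0\<close> by (simp add: less_log_iff)
  then show ?thesis
    using assms(1) \<open>z \<noteq> 0\<close> by (simp add: lg_div_eq_log field_simps)
qed

lemma Eset_increments:
  assumes "x \<in> Eset \<phi> \<psi> \<beta> f"
  obtains F where "\<And>j. cmod (F (Suc j) - F j) = cmod (Qop \<psi> f j x)"
    and "(\<lambda>j. lg (F j) / ereal (real j * ln 2)) \<longlonglongrightarrow> ereal \<beta>"
proof (cases "\<beta> > 0")
  case True
  have "cmod (Pop \<phi> \<psi> f (Suc j) x - Pop \<phi> \<psi> f j x) = cmod (Qop \<psi> f j x)" for j
    by (simp add: Pop_def)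
  moreover have "(\<lambda>j. lg (Pop \<phi> \<psi> f j x) / ereal (real j * ln 2)) \<longlonglongrightarrow> ereal \<beta>"
    using True assms unfolding Eset_def by simp
  ultimately show ?thesis
    by (rule that)
next
  case False
  then have conv: "convergent (\<lambda>j. Pop \<phi> \<psi> f j x)"
    and lim: "(\<lambda>j. lg (Rop \<psi> f j x) / ereal (real j * ln 2)) \<longlonglongrightarrow> ereal \<beta>"
    using assms unfolding Eset_def by auto
  have "summable (\<lambda>l. Qop \<psi> f l x)"
    using conv by (simp add: Pop_def convergent_add_const_iff summable_iff_convergent)
  then have "summable (\<lambda>n. Qop \<psi> f (j + n) x)" for j
    using summable_ignore_initial_segment[where f = "\<lambda>l. Qop \<psi> f l x" and k = j] by (simp add: add.commute)
  then have "Rop \<psi> f (Suc j) x = Rop \<psi> f j x - Qop \<psi> f j x" for j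
    unfolding Rop_def using suminf_split_head by fastforce
  then have "cmod (Rop \<psi> f (Suc j) x - Rop \<psi> f j x) = cmod (Qop \<psi> f j x)" for j
    by (simp add: norm_minus_commute)
  then show ?thesis
    using lim by (rule that)
qed

theorem lemma3p4:
  fixes V :: "int \<Rightarrow> (real^'d \<Rightarrow> complex) set"
    and \<phi> :: "real^'d \<Rightarrow> complex"
    and \<psi> :: "nat \<Rightarrow> real^'d \<Rightarrow> complex"
    and f :: "real^'d \<Rightarrow> complex"
    and s p \<beta> \<epsilon> :: real
  assumes "wavelet_setup V \<phi> \<psi>"
    and "s \<ge> 0" and "p \<ge> 1" and "\<beta> \<noteq> 0" and "0 < \<epsilon>" and "\<epsilon> < 1"
    and "f \<in> besov s p \<phi> \<psi>"
  shows "Eset \<phi> \<psi> \<beta> f \<subseteq>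
    {x. Liminf sequentially
          (\<lambda>j::nat. SUP l \<in> {l::nat. (1 - \<epsilon>) * real j \<le> real l \<and> real l \<le> (1 + \<epsilon>) * real j}.
              lg (Qop \<psi> f l x) / ereal (real j * ln 2)) \<ge> ereal \<beta>}"
proof
  fix x
  assume "x \<in> Eset \<phi> \<psi> \<beta> f"
  then obtain F where step: "\<And>j. cmod (F (Suc j) - F j) = cmod (Qop \<psi> f j x)"
    and lim: "(\<lambda>j. lg (F j) / ereal (real j * ln 2)) \<longlonglongrightarrow> ereal \<beta>"
    by (elim Eset_increments) blast
  have "\<forall>\<^sub>F j in sequentially. \<exists>l. (1 - \<epsilon>) * real j \<le> real l \<and> real l \<le> (1 + \<epsilon>) * real j
          \<and> 2 powr (\<beta> * real j) < cmod (Qop \<psi> f l x)"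
    using step log_rate_of_lg_rate[OF lim] assms(4-6)
    by (intro eventually_large_increment_in_window) auto
  with eventually_gt_at_top[of 0]
  have "\<forall>\<^sub>F j in sequentially. ereal \<beta> \<le> (SUP l \<in> {l. (1 - \<epsilon>) * real j \<le> real l \<and> real l \<le> (1 + \<epsilon>) * real j}.
          lg (Qop \<psi> f l x) / ereal (real j * ln 2))"
    by eventually_elim (blast intro: SUP_upper2 ereal_le_lg_div_of_powr_less)
  then show "x \<in> {x. Liminf sequentially (\<lambda>j. SUP l \<in> {l. (1 - \<epsilon>) * real j \<le> real l \<and> real l \<le> (1 + \<epsilon>) * real j}.
          lg (Qop \<psi> f l x) / ereal (real j * ln 2)) \<ge> ereal \<beta>}"
    by (simp add: Liminf_bounded)
qed

end
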